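(* For every integer $k\geq1$, as identities of rational functions in the indeterminates $a,b,q$, $$\sum_{r=1}^{k}(-1)^{k-r}\sum_{\substack{k_1+\cdots+k_r=k\\ k_i\geq1}}\ \prod_{i=1}^{r}\prod_{j=1}^{k_i}\frac{a-bq^{j-1}}{1-q^j}=\prod_{i=1}^{k}\frac{aq^{i-1}-b}{1-q^i} \quad\text{and}\quad \sum_{r=1}^{k}(-1)^{k-r}\sum_{\substack{k_1+\cdots+k_r=k\\ k_i\geq1}}\ \prod_{i=1}^{r}\prod_{j=1}^{k_i}\frac{aq^{j-1}-b}{1-q^j}=\prod_{i=1}^{k}\frac{a-bq^{i-1}}{1-q^i},$$ where the inner sums run over all ordered $r$-tuples of positive integers with sum $k$. *)

theory Defs
  imports Main
begin

definition compositions :: "nat \<Rightarrow> nat \<Rightarrow> nat list set" where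
  "compositions k r = {ks. length ks = r \<and> (\<forall>x\<in>set ks. x \<ge> 1) \<and> sum_list ks = k}"

end

theory Submission
  imports Defs
begin

text \<open>Let c_m(a,b) = \<Prod>j=1..m. (a - b q^(j-1)) / (1 - q^j). By the q-binomial theorem
  A_{a,b}(x) = \<Sum>m. c_m(a,b) x^m equals (bx;q)_\<infinity> / (ax;q)_\<infinity>, so A_{a,b} A_{b,a} = 1,
  i.e. the convolutions C_n = \<Sum>m\<le>n. c_m(a,b) c_(n-m)(b,a) vanish for n \<ge> 1; this is
  proved directly from the recurrence (1 - q^(n+1)) C_(n+1) = a (1 - q^n) C_n.
  Expanding 1/(1 - \<Sum>m\<ge>1. g_m x^m) as a geometric series shows that the left-hand
  sides are the coefficients of 1/A_{a,b}(-x) = A_{b,a}(-x) and of 1/A_{b,a}(x) = A_{a,b}(x),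
  whose coefficients are the right-hand sides.\<close>

lemma finite_compositions: "finite (compositions k r)"
proof (rule finite_subset)
  show "compositions k r \<subseteq> {xs. set xs \<subseteq> {..k} \<and> length xs = r}"
    by (auto simp: compositions_def dest: member_le_sum_list)
  show "finite {xs. set xs \<subseteq> {..k} \<and> length xs = r}"
    by (rule finite_lists_length_eq) simp
qed

lemma compositions_0: "compositions k 0 = (if k = 0 then {[]} else {})"
  by (auto simp: compositions_def)

lemma compositions_length_le: "ks \<in> compositions k r \<Longrightarrow> r \<le> k"
proof -
  have "\<forall>x\<in>set ks. x \<ge> 1 \<Longrightarrow> length ks \<le> sum_list ks"
    by (induction ks) auto
  then show "ks \<in> compositions k r \<Longrightarrow> r \<le> k"
    by (auto simp: compositions_def)
qed

lemma compositions_eq_empty: "k < r \<Longrightarrow> compositions k r = {}"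
  using compositions_length_le by fastforce

lemma compositions_Suc:
  "compositions k (Suc r) = (\<Union>m\<in>{1..k}. (#) m ` compositions (k - m) r)"
  by (auto simp: compositions_def length_Suc_conv image_iff)

lemma sum_compositions_Suc:
  "(\<Sum>ks\<in>compositions k (Suc r). h ks) = (\<Sum>m=1..k. \<Sum>ks\<in>compositions (k - m) r. h (m # ks))"
  unfolding compositions_Suc
  by (subst sum.UNION_disjoint) (auto simp: finite_compositions sum.reindex)

text \<open>The coefficient of x^k in 1/(1 - \<Sum>m\<ge>1. g_m x^m).\<close>
definition composition_sum :: "(nat \<Rightarrow> 'a::comm_semiring_1) \<Rightarrow> nat \<Rightarrow> 'a" where
  "composition_sum g k = (\<Sum>r\<le>k. \<Sum>ks\<in>compositions k r. prod_list (map g ks))"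

lemma composition_sum_atMost:
  "k \<le> N \<Longrightarrow> (\<Sum>r\<le>N. \<Sum>ks\<in>compositions k r. prod_list (map g ks)) = composition_sum g k"
  by (induction N rule: dec_induct) (simp_all add: composition_sum_def compositions_eq_empty)

lemma composition_sum_0 [simp]: "composition_sum g 0 = 1"
  by (simp add: composition_sum_def compositions_0)

lemma composition_sum_rec:
  assumes "k \<ge> 1"
  shows "composition_sum g k = (\<Sum>m=1..k. g m * composition_sum g (k - m))"
proof -
  obtain n where k: "k = Suc n"
    using assms by (cases k) auto
  have "composition_sum g k = (\<Sum>r\<le>n. \<Sum>ks\<in>compositions k (Suc r). prod_list (map g ks))"
    unfolding composition_sum_def k sum.atMost_Suc_shift by (simp add: compositions_0)
  also have "\<dots> = (\<Sum>r\<le>n. \<Sum>m=1..k. g m * (\<Sum>ks\<in>compositions (k - m) r. prod_list (map g ks)))"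
    by (simp add: sum_compositions_Suc sum_distrib_left)
  also have "\<dots> = (\<Sum>m=1..k. g m * (\<Sum>r\<le>n. \<Sum>ks\<in>compositions (k - m) r. prod_list (map g ks)))"
    by (subst sum.swap) (simp add: sum_distrib_left)
  also have "\<dots> = (\<Sum>m=1..k. g m * composition_sum g (k - m))"
    by (intro sum.cong refl) (subst composition_sum_atMost, auto simp: k)
  finally show ?thesis .
qed

lemma composition_sum_alternating_inverse:
  fixes A B :: "nat \<Rightarrow> 'a::comm_ring_1"
  assumes A0: "A 0 = 1" and B0: "B 0 = 1"
    and conv: "\<And>n. 1 \<le> n \<Longrightarrow> n \<le> K \<Longrightarrow> (\<Sum>m\<le>n. (-1) ^ m * A m * B (n - m)) = 0"
    and "k \<le> K"
  shows "composition_sum (\<lambda>m. (-1) ^ Suc m * A m) k = B k"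
  using \<open>k \<le> K\<close>
proof (induction k rule: less_induct)
  case (less k)
  show ?case
  proof (cases "k = 0")
    case True
    then show ?thesis using B0 by simp
  next
    case False
    then have k: "k \<ge> 1" by simp
    have "{..k} = insert 0 {1..k}" by auto
    then have "B k + (\<Sum>m=1..k. (-1) ^ m * A m * B (k - m)) = 0"
      using conv[OF k less.prems] A0 by simp
    then have recB: "B k = (\<Sum>m=1..k. (-1) ^ Suc m * A m * B (k - m))"
      by (simp add: sum_negf eq_neg_iff_add_eq_0)
    show ?thesis
      unfolding composition_sum_rec[OF k] recB
      by (intro sum.cong refl) (use less in simp)
  qed
qed

lemma prod_list_map_alternating:
  fixes f :: "nat \<Rightarrow> 'a::comm_ring_1"
  shows "prod_list (map (\<lambda>m. (-1) ^ Suc m * f m) ks)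
     = (-1) ^ (sum_list ks + length ks) * prod_list (map f ks)"
proof (induction ks)
  case (Cons x ks)
  then show ?case
    by (simp only: list.map prod_list.Cons) (simp add: power_add mult_ac)
qed simp

lemma alternating_composition_sum_eq:
  fixes f :: "nat \<Rightarrow> 'a::comm_ring_1"
  assumes "k \<ge> 1"
  shows "(\<Sum>r=1..k. (-1) ^ (k - r) * (\<Sum>ks\<in>compositions k r. \<Prod>i<r. f (ks ! i)))
     = composition_sum (\<lambda>m. (-1) ^ Suc m * f m) k"
proof -
  have term_eq: "(-1) ^ (k - r) * (\<Prod>i<r. f (ks ! i)) = prod_list (map (\<lambda>m. (-1) ^ Suc m * f m) ks)"
    if ks: "ks \<in> compositions k r" for r ks
  proof -
    have "length ks = r" "sum_list ks = k" "r \<le> k"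
      using ks compositions_length_le by (auto simp: compositions_def)
    moreover have "(-1::'a) ^ (k + r) = (-1) ^ (k - r)"
    proof -
      have "k + r = (k - r) + 2 * r" using \<open>r \<le> k\<close> by simp
      then show ?thesis by (simp only: power_add power_mult) simp
    qed
    moreover have "(\<Prod>i<r. f (ks ! i)) = prod_list (map f ks)"
      using \<open>length ks = r\<close> by (simp add: prod.list_conv_set_nth atLeast0LessThan)
    ultimately have "(-1) ^ (k - r) * (\<Prod>i<r. f (ks ! i))
        = (-1) ^ (sum_list ks + length ks) * prod_list (map f ks)"
      by simp
    then show ?thesis
      by (simp only: prod_list_map_alternating)
  qed
  have "{..k} = insert 0 {1..k}" by auto
  then show ?thesis
    using assms by (simp add: composition_sum_def compositions_0 sum_distrib_left term_eq)
qed

definition qcoeff :: "'a::field \<Rightarrow> 'a \<Rightarrow> 'a \<Rightarrow> nat \<Rightarrow> 'a" where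
  "qcoeff q a b m = (\<Prod>j=1..m. (a - b * q ^ (j - 1)) / (1 - q ^ j))"

lemma qcoeff_0 [simp]: "qcoeff q a b 0 = 1"
  by (simp add: qcoeff_def)

lemma qcoeff_Suc:
  assumes "1 - q ^ Suc m \<noteq> 0"
  shows "(1 - q ^ Suc m) * qcoeff q a b (Suc m) = (a - b * q ^ m) * qcoeff q a b m"
  using assms by (simp add: qcoeff_def prod.cl_ivl_Suc)

lemma qcoeff_reflect:
  "(\<Prod>j=1..m. (a * q ^ (j - 1) - b) / (1 - q ^ j)) = (-1) ^ m * qcoeff q b a m"
proof -
  have "(\<Prod>j=1..m. (a * q ^ (j - 1) - b) / (1 - q ^ j))
      = (\<Prod>j=1..m. - ((b - a * q ^ (j - 1)) / (1 - q ^ j)))"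
    by (intro prod.cong refl) (simp add: minus_divide_left)
  then show ?thesis
    by (simp add: qcoeff_def prod_uminus)
qed

definition qcoeff_conv :: "'a::field \<Rightarrow> 'a \<Rightarrow> 'a \<Rightarrow> nat \<Rightarrow> 'a" where
  "qcoeff_conv q a b n = (\<Sum>m\<le>n. qcoeff q a b m * qcoeff q b a (n - m))"

lemma qcoeff_conv_Suc:
  fixes q :: "'a::field"
  assumes nz: "\<And>j. 1 \<le> j \<Longrightarrow> j \<le> Suc n \<Longrightarrow> 1 - q ^ j \<noteq> 0"
  shows "(1 - q ^ Suc n) * qcoeff_conv q a b (Suc n) = a * (1 - q ^ n) * qcoeff_conv q a b n"
proof -
  let ?c = "\<lambda>i. qcoeff q a b i * qcoeff q b a (n - i)"
  \<comment> \<open>split 1 - q^(n+1) = (1 - q^m) + q^m (1 - q^(n+1-m)) and lower the index of the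
    left resp. right factor in each part with \<open>qcoeff_Suc\<close>\<close>
  have split: "(1 - q ^ Suc n) * qcoeff_conv q a b (Suc n) =
      (\<Sum>m\<le>Suc n. (1 - q ^ m) * qcoeff q a b m * qcoeff q b a (Suc n - m))
    + (\<Sum>m\<le>Suc n. q ^ m * qcoeff q a b m * ((1 - q ^ (Suc n - m)) * qcoeff q b a (Suc n - m)))"
    unfolding qcoeff_conv_def sum_distrib_left sum.distrib[symmetric]
  proof (intro sum.cong refl)
    fix m assume "m \<in> {..Suc n}"
    then have "q ^ m * q ^ (Suc n - m) = q ^ Suc n"
      by (simp add: power_add[symmetric])
    then show "(1 - q ^ Suc n) * (qcoeff q a b m * qcoeff q b a (Suc n - m)) =
      (1 - q ^ m) * qcoeff q a b m * qcoeff q b a (Suc n - m) +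
      q ^ m * qcoeff q a b m * ((1 - q ^ (Suc n - m)) * qcoeff q b a (Suc n - m))"
      by (simp add: algebra_simps)
  qed
  have left: "(\<Sum>m\<le>Suc n. (1 - q ^ m) * qcoeff q a b m * qcoeff q b a (Suc n - m))
      = (\<Sum>i\<le>n. (a - b * q ^ i) * ?c i)"
  proof -
    have "(1 - q ^ Suc i) * qcoeff q a b (Suc i) = (a - b * q ^ i) * qcoeff q a b i" if "i \<le> n" for i
      using qcoeff_Suc nz[of "Suc i"] that by simp
    then show ?thesis
      unfolding sum.atMost_Suc_shift by (simp add: mult.assoc del: power_Suc)
  qed
  have right: "(\<Sum>m\<le>Suc n. q ^ m * qcoeff q a b m * ((1 - q ^ (Suc n - m)) * qcoeff q b a (Suc n - m)))
      = (\<Sum>i\<le>n. q ^ i * (b - a * q ^ (n - i)) * ?c i)"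
  proof -
    have "(1 - q ^ (Suc n - i)) * qcoeff q b a (Suc n - i) = (b - a * q ^ (n - i)) * qcoeff q b a (n - i)"
      if "i \<le> n" for i
      using qcoeff_Suc[of q "n - i" b a] nz[of "Suc (n - i)"] that by (simp add: Suc_diff_le)
    then show ?thesis
      by (simp add: sum.atMost_Suc mult_ac del: power_Suc)
  qed
  have "(1 - q ^ Suc n) * qcoeff_conv q a b (Suc n)
      = (\<Sum>i\<le>n. ((a - b * q ^ i) + q ^ i * (b - a * q ^ (n - i))) * ?c i)"
    unfolding split left right sum.distrib[symmetric] by (intro sum.cong refl) (simp add: algebra_simps)
  also have "\<dots> = (\<Sum>i\<le>n. a * (1 - q ^ n) * ?c i)"
  proof (intro sum.cong refl)
    fix i assume "i \<in> {..n}"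
    then have "q ^ i * q ^ (n - i) = q ^ n"
      by (simp add: power_add[symmetric])
    then show "((a - b * q ^ i) + q ^ i * (b - a * q ^ (n - i))) * ?c i = a * (1 - q ^ n) * ?c i"
      by (simp add: algebra_simps)
  qed
  also have "\<dots> = a * (1 - q ^ n) * qcoeff_conv q a b n"
    by (simp add: qcoeff_conv_def sum_distrib_left)
  finally show ?thesis .
qed

lemma qcoeff_conv_eq_0:
  fixes q :: "'a::field"
  assumes nz: "\<And>j. 1 \<le> j \<Longrightarrow> j \<le> K \<Longrightarrow> 1 - q ^ j \<noteq> 0"
    and "1 \<le> n" "n \<le> K"
  shows "qcoeff_conv q a b n = 0"
  using assms(2,3)
proof (induction n)
  case (Suc n)
  have "(1 - q ^ Suc n) * qcoeff_conv q a b (Suc n) = a * (1 - q ^ n) * qcoeff_conv q a b n"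
    using nz Suc.prems by (intro qcoeff_conv_Suc) auto
  also have "\<dots> = 0"
    using Suc by (cases n) simp_all
  finally show ?case
    using nz[of "Suc n"] Suc.prems by simp
qed simp

lemma qcoeff_conv_alternating:
  "(\<Sum>m\<le>n. (-1) ^ m * qcoeff q a b m * ((-1) ^ (n - m) * qcoeff q b a (n - m)))
     = (-1) ^ n * qcoeff_conv q a b n"
proof -
  have sign: "(-1::'a) ^ m * (-1) ^ (n - m) = (-1) ^ n" if "m \<in> {..n}" for m
    using that by (simp flip: power_add)
  show ?thesis
    unfolding qcoeff_conv_def sum_distrib_left
    by (intro sum.cong refl) (metis sign mult.assoc mult.left_commute)
qed

lemma composition_sum_qcoeff:
  fixes q :: "'a::field"
  assumes "\<And>j. 1 \<le> j \<Longrightarrow> j \<le> k \<Longrightarrow> 1 - q ^ j \<noteq> 0"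
  shows "composition_sum (\<lambda>m. (-1) ^ Suc m * qcoeff q a b m) k = (-1) ^ k * qcoeff q b a k"
  by (rule composition_sum_alternating_inverse[where K = k])
    (simp_all add: qcoeff_conv_alternating qcoeff_conv_eq_0[OF assms])

lemma composition_sum_qcoeff_reflected:
  fixes q :: "'a::field"
  assumes "\<And>j. 1 \<le> j \<Longrightarrow> j \<le> k \<Longrightarrow> 1 - q ^ j \<noteq> 0"
  shows "composition_sum (\<lambda>m. (-1) ^ Suc m * ((-1) ^ m * qcoeff q b a m)) k = qcoeff q a b k"
  by (rule composition_sum_alternating_inverse[where K = k])
    (simp_all add: qcoeff_conv_eq_0[OF assms] flip: qcoeff_conv_def mult.assoc power_add)

theorem mainTheorem14:
  fixes a b q :: "'a::field" and k :: nat
  assumes "k \<ge> 1"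
    and "\<And>j. 1 \<le> j \<Longrightarrow> j \<le> k \<Longrightarrow> 1 - q ^ j \<noteq> 0"
  shows "(\<Sum>r=1..k. (-1) ^ (k - r) *
            (\<Sum>ks\<in>compositions k r. \<Prod>i<r. \<Prod>j=1..ks ! i.
               (a - b * q ^ (j - 1)) / (1 - q ^ j)))
          = (\<Prod>i=1..k. (a * q ^ (i - 1) - b) / (1 - q ^ i))
       \<and> (\<Sum>r=1..k. (-1) ^ (k - r) *
            (\<Sum>ks\<in>compositions k r. \<Prod>i<r. \<Prod>j=1..ks ! i.
               (a * q ^ (j - 1) - b) / (1 - q ^ j)))
          = (\<Prod>i=1..k. (a - b * q ^ (i - 1)) / (1 - q ^ i))"
proof -
  have "composition_sum (\<lambda>m. (-1) ^ Suc m * qcoeff q a b m) k = (-1) ^ k * qcoeff q b a k"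
    and "composition_sum (\<lambda>m. (-1) ^ Suc m * ((-1) ^ m * qcoeff q b a m)) k = qcoeff q a b k"
    using composition_sum_qcoeff composition_sum_qcoeff_reflected assms(2) by blast+
  then show ?thesis
    using alternating_composition_sum_eq[OF assms(1), of "qcoeff q a b"]
      alternating_composition_sum_eq[OF assms(1), of "\<lambda>m. (-1) ^ m * qcoeff q b a m"]
    unfolding qcoeff_reflect by (simp only: qcoeff_def)
qed

end
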